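(* In the setting of the context, suppose Condition I holds ($ZR^i\in L^1$ for all $i$ and all $Z\in\mathcal{Q}$), and let $\tilde{\mathcal{Q}}\subset\mathcal{Q}$ satisfy Conditions POS and INT. If $1\in\tilde{\mathcal{Q}}$, then $\rho$ is strictly expectation bounded (i.e. $\rho(X)>\mathbb{E}[-X]$ for every non-constant $X\in L$) and $\Pi^\rho_0=\{\mathbf{0}\}$. If in addition $\rho_1<\infty$, then for all $\nu\ge0$ the set $\Pi^\rho_\nu$ is nonempty, compact and convex.
   Context: Let $(\Omega,\mathcal{F},\mathbb{P})$ be a probability space and a market: riskless asset $S^0_0=1$, $S^0_1=1+r$, $r>-1$; risky assets $S^1,\dots,S^d$ with constants $S^i_0>0$ and real-valued $\mathcal{F}$-measurable $S^i_1$; returns $R^i:=(S^i_1-S^i_0)/S^i_0$. Standing assumptions: nonredundancy (if $\theta\in\mathbb{R}^{1+d}$ with $\sum_{i=0}^d\theta^iS^i_t=0$ a.s. for $t\in\{0,1\}$ then $\theta=0$), $R^i\in L^1$, $\mathbb{E}[R^i]\ne r$ for some $i$. Excess return: $X_\pi:=\pi\cdot(R-r\mathbf{1})$; $\Pi_\nu:=\{\pi:\mathbb{E}[X_\pi]=\nu\}$. $L$ is a Riesz space with $L^\infty\subset L\subset L^1$ containing all $X_\pi$. $\mathcal{D}:=\{Z\in L^1:Z\ge0,\mathbb{E}[Z]=1\}$; $\mathcal{Q}\subset\mathcal{D}$ is convex with $1\in\mathcal{Q}$ and $\rho(X)=\sup_{Z\in\mathcal{Q}}\mathbb{E}[-ZX]$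 on $L$, with $\mathbb{E}[-ZX]:=\mathbb{E}[ZX^-]-\mathbb{E}[ZX^+]$ and $\mathbb{E}[-ZX]=\infty$ if $\mathbb{E}[ZX^-]=\infty$. $\rho_\nu:=\inf\{\rho(X_\pi):\pi\in\Pi_\nu\}$; $\Pi^\rho_\nu$ is the set of $\pi\in\Pi_\nu$ with $\rho(X_\pi)<\infty$ and $\rho(X_\pi)\le\rho(X_{\pi'})$ for all $\pi'\in\Pi_\nu$. Condition POS for $\tilde{\mathcal{Q}}$: $\tilde Z>0$ a.s. for all $\tilde Z\in\tilde{\mathcal{Q}}$. Condition INT: for every $\tilde Z\in\tilde{\mathcal{Q}}$ there is an $L^\infty$-dense subset $\mathcal{E}$ of $\mathcal{D}\cap L^\infty$ such that for every $Z\in\mathcal{E}$ there is $\lambda\in(0,1)$ with $\lambda Z+(1-\lambda)\tilde Z\in\mathcal{Q}$. *)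

theory Defs
  imports "HOL-Probability.Probability"
begin

text \<open>Risky assets are indexed by a finite type 'd (so d = CARD('d)); portfolios
  are vectors in real^'d. S0 i > 0 is the initial price, S1 i the terminal price.\<close>

definition ret :: "('d \<Rightarrow> real) \<Rightarrow> ('d \<Rightarrow> 'a \<Rightarrow> real) \<Rightarrow> 'd \<Rightarrow> 'a \<Rightarrow> real" where
  "ret S0 S1 i x = (S1 i x - S0 i) / S0 i"

definition excess :: "real \<Rightarrow> ('d \<Rightarrow> 'a \<Rightarrow> real) \<Rightarrow> real^'d::finite \<Rightarrow> 'a \<Rightarrow> real" where
  "excess r R p x = (\<Sum>i\<in>UNIV. p $ i * (R i x - r))"

definition nonredundant ::
  "'a measure \<Rightarrow> real \<Rightarrow> ('d::finite \<Rightarrow> real) \<Rightarrow> ('d \<Rightarrow> 'a \<Rightarrow> real) \<Rightarrow> bool" where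
  "nonredundant M r S0 S1 \<longleftrightarrow>
     (\<forall>(t0::real) (t::real^'d).
        (t0 * 1 + (\<Sum>i\<in>UNIV. t $ i * S0 i) = 0 \<and>
         (AE x in M. t0 * (1 + r) + (\<Sum>i\<in>UNIV. t $ i * S1 i x) = 0))
        \<longrightarrow> t0 = 0 \<and> t = 0)"

text \<open>Sets of functions representing sets of equivalence classes: closed under a.e. equality.\<close>
definition ae_closed :: "'a measure \<Rightarrow> ('a \<Rightarrow> real) set \<Rightarrow> bool" where
  "ae_closed M S \<longleftrightarrow> (\<forall>f\<in>S. \<forall>g\<in>borel_measurable M. (AE x in M. f x = g x) \<longrightarrow> g \<in> S)"

definition Linf :: "'a measure \<Rightarrow> ('a \<Rightarrow> real) set" where
  "Linf M = {f \<in> borel_measurable M. \<exists>C. AE x in M. \<bar>f x\<bar> \<le> C}"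

definition riesz_between :: "'a measure \<Rightarrow> ('a \<Rightarrow> real) set \<Rightarrow> bool" where
  "riesz_between M L \<longleftrightarrow>
     ae_closed M L \<and>
     Linf M \<subseteq> L \<and>
     (\<forall>f\<in>L. integrable M f) \<and>
     (\<forall>f\<in>L. \<forall>g\<in>L. (\<lambda>x. f x + g x) \<in> L) \<and>
     (\<forall>c::real. \<forall>f\<in>L. (\<lambda>x. c * f x) \<in> L) \<and>
     (\<forall>f\<in>L. \<forall>g\<in>L. (\<lambda>x. max (f x) (g x)) \<in> L)"

definition densities :: "'a measure \<Rightarrow> ('a \<Rightarrow> real) set" where
  "densities M = {Z. integrable M Z \<and> (AE x in M. 0 \<le> Z x) \<and> integral\<^sup>L M Z = 1}"

definition convex_fset :: "('a \<Rightarrow> real) set \<Rightarrow> bool" where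
  "convex_fset Q \<longleftrightarrow> (\<forall>Z1\<in>Q. \<forall>Z2\<in>Q. \<forall>t::real. 0 \<le> t \<and> t \<le> 1 \<longrightarrow>
       (\<lambda>x. t * Z1 x + (1 - t) * Z2 x) \<in> Q)"

text \<open>E[-ZX] := E[Z X^-] - E[Z X^+], and = \<infinity> if E[Z X^-] = \<infinity>.\<close>
definition exp_neg :: "'a measure \<Rightarrow> ('a \<Rightarrow> real) \<Rightarrow> ('a \<Rightarrow> real) \<Rightarrow> ereal" where
  "exp_neg M Z X =
     (let a = (\<integral>\<^sup>+ x. ennreal (Z x * max 0 (- X x)) \<partial>M);
          b = (\<integral>\<^sup>+ x. ennreal (Z x * max 0 (X x)) \<partial>M)
      in if a = \<infinity> then \<infinity> else enn2ereal a - enn2ereal b)"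

definition rho :: "'a measure \<Rightarrow> ('a \<Rightarrow> real) set \<Rightarrow> ('a \<Rightarrow> real) \<Rightarrow> ereal" where
  "rho M Q X = (SUP Z\<in>Q. exp_neg M Z X)"

definition Pi_nu :: "'a measure \<Rightarrow> real \<Rightarrow> ('d \<Rightarrow> 'a \<Rightarrow> real) \<Rightarrow> real \<Rightarrow> (real^'d::finite) set" where
  "Pi_nu M r R \<nu> = {p. integral\<^sup>L M (excess r R p) = \<nu>}"

definition rho_nu :: "'a measure \<Rightarrow> ('a \<Rightarrow> real) set \<Rightarrow> real \<Rightarrow> ('d::finite \<Rightarrow> 'a \<Rightarrow> real) \<Rightarrow> real \<Rightarrow> ereal" where
  "rho_nu M Q r R \<nu> = (INF p\<in>Pi_nu M r R \<nu>. rho M Q (excess r R p))"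

definition Pi_rho :: "'a measure \<Rightarrow> ('a \<Rightarrow> real) set \<Rightarrow> real \<Rightarrow> ('d::finite \<Rightarrow> 'a \<Rightarrow> real) \<Rightarrow> real \<Rightarrow> (real^'d) set" where
  "Pi_rho M Q r R \<nu> = {p \<in> Pi_nu M r R \<nu>. rho M Q (excess r R p) < \<infinity> \<and>
       (\<forall>p'\<in>Pi_nu M r R \<nu>. rho M Q (excess r R p) \<le> rho M Q (excess r R p'))}"

definition strictly_expectation_bounded :: "'a measure \<Rightarrow> ('a \<Rightarrow> real) set \<Rightarrow> ('a \<Rightarrow> real) set \<Rightarrow> bool" where
  "strictly_expectation_bounded M L Q \<longleftrightarrow>
     (\<forall>X\<in>L. \<not> (\<exists>c. AE x in M. X x = c) \<longrightarrow> rho M Q X > ereal (integral\<^sup>L M (\<lambda>x. - X x)))"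

definition cond_POS :: "'a measure \<Rightarrow> ('a \<Rightarrow> real) set \<Rightarrow> bool" where
  "cond_POS M Qt \<longleftrightarrow> (\<forall>Z\<in>Qt. AE x in M. 0 < Z x)"

definition cond_INT :: "'a measure \<Rightarrow> ('a \<Rightarrow> real) set \<Rightarrow> ('a \<Rightarrow> real) set \<Rightarrow> bool" where
  "cond_INT M Q Qt \<longleftrightarrow>
     (\<forall>Zt\<in>Qt. \<exists>E. E \<subseteq> densities M \<inter> Linf M \<and>
        (\<forall>W\<in>densities M \<inter> Linf M. \<forall>\<epsilon>>0. \<exists>Z\<in>E. AE x in M. \<bar>Z x - W x\<bar> \<le> \<epsilon>) \<and>
        (\<forall>Z\<in>E. \<exists>l::real. 0 < l \<and> l < 1 \<and> (\<lambda>x. l * Z x + (1 - l) * Zt x) \<in> Q))"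

end

theory Submission
  imports Defs
begin

(* For Z in Q the map p |-> E[-Z X_p] is linear, p |-> <w_Z, p>, so p |-> rho(X_p) is the
   support function of W = {w_Z. Z in Q}, and the budget constraint E[X_p] = nu is the
   hyperplane <e, p> = nu with -e = w_1 in W.
   Strict expectation boundedness comes from tilting: the normalised indicator of {X < E X}
   is a bounded density under which X has mean below E X; by INT it can be approximated
   uniformly by densities that, mixed with 1, lie in Q.  With nonredundancy (a nonzero
   portfolio with zero mean excess return is not a.s. constant) the support function is
   strictly positive on the nonzero points of the hyperplane <e, p> = 0.  Hence 0 is the
   only minimiser for nu = 0, and every sublevel set of the support function on a
   hyperplane is closed, convex and, having no recession direction, bounded; the minimisers
   for nu form the sublevel set at the infimum, nonempty as a nested intersection of
   nonempty compact sets. *)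

section \<open>Support functions restricted to hyperplanes\<close>

lemma unbounded_closed_convex_contains_ray:
  fixes S :: "'a::euclidean_space set"
  assumes "closed S" and "convex S" and "\<not> bounded S" and "a \<in> S"
  obtains d where "d \<noteq> 0" and "\<And>t. 0 \<le> t \<Longrightarrow> a + t *\<^sub>R d \<in> S"
proof -
  have "\<forall>n::nat. \<exists>p\<in>S. real n < norm (p - a)"
    using \<open>\<not> bounded S\<close> unfolding bounded_def by (metis dist_norm norm_minus_commute not_le)
  then obtain p where p: "\<And>n. p n \<in> S" and far: "\<And>n. real n < norm (p n - a)"
    by metis
  define u where "u n = (1 / norm (p n - a)) *\<^sub>R (p n - a)" for n
  have u_sphere: "u n \<in> sphere 0 1" for n
    using far[of n] by (auto simp: u_def)
  obtain d r where "d \<in> sphere 0 1" and r: "strict_mono r" and lim: "(u \<circ> r) \<longlonglongrightarrow> d"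
    using seq_compactE[OF compact_imp_seq_compact[OF compact_sphere]] u_sphere by metis
  then have "d \<noteq> 0" by auto
  moreover have "a + t *\<^sub>R d \<in> S" if "0 \<le> t" for t
  proof (rule Lim_in_closed_set[OF \<open>closed S\<close>])
    show "((\<lambda>n. a + t *\<^sub>R (u \<circ> r) n) \<longlongrightarrow> a + t *\<^sub>R d) sequentially"
      using lim by (intro tendsto_intros)
    obtain N :: nat where "t \<le> real N" using real_arch_simple by blast
    then show "\<forall>\<^sub>F n in sequentially. a + t *\<^sub>R (u \<circ> r) n \<in> S"
      unfolding eventually_sequentially
    proof (intro exI allI impI)
      fix n assume "N \<le> n"
      define s where "s = t / norm (p (r n) - a)"
      have "real N \<le> real (r n)" using \<open>N \<le> n\<close> seq_suble[OF r, of n] by simp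
      then have "t < norm (p (r n) - a)" using \<open>t \<le> real N\<close> far[of "r n"] by linarith
      then have "0 \<le> s" "s \<le> 1"
        using \<open>0 \<le> t\<close> by (auto simp: s_def divide_le_eq_1)
      then have "(1 - s) *\<^sub>R a + s *\<^sub>R p (r n) \<in> S"
        using \<open>convex S\<close> \<open>a \<in> S\<close> p unfolding convex_alt by blast
      moreover have "(1 - s) *\<^sub>R a + s *\<^sub>R p (r n) = a + t *\<^sub>R (u \<circ> r) n"
        by (simp add: s_def u_def algebra_simps)
      ultimately show "a + t *\<^sub>R (u \<circ> r) n \<in> S" by simp
    qed
  qed simp
  ultimately show thesis using that by blast
qed

definition support_fun :: "'v::real_inner set \<Rightarrow> 'v \<Rightarrow> ereal" where
  "support_fun W p = (SUP w\<in>W. ereal (inner w p))"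

definition support_sublevel :: "'v::real_inner set \<Rightarrow> 'v \<Rightarrow> real \<Rightarrow> real \<Rightarrow> 'v set" where
  "support_sublevel W e \<nu> c = {p. inner e p = \<nu> \<and> (\<forall>w\<in>W. inner w p \<le> c)}"

definition support_argmin :: "'v::real_inner set \<Rightarrow> 'v \<Rightarrow> real \<Rightarrow> 'v set" where
  "support_argmin W e \<nu> = {p. inner e p = \<nu> \<and> support_fun W p < \<infinity> \<and>
     (\<forall>p'. inner e p' = \<nu> \<longrightarrow> support_fun W p \<le> support_fun W p')}"

lemma support_fun_le_iff: "support_fun W p \<le> ereal c \<longleftrightarrow> (\<forall>w\<in>W. inner w p \<le> c)"
  by (simp add: support_fun_def SUP_le_iff)

lemma support_fun_ge: "w \<in> W \<Longrightarrow> ereal (inner w p) \<le> support_fun W p"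
  unfolding support_fun_def by (rule SUP_upper)

lemma support_fun_zero: "W \<noteq> {} \<Longrightarrow> support_fun W 0 = 0"
  by (simp add: support_fun_def zero_ereal_def)

lemma mem_support_sublevel_iff:
  "p \<in> support_sublevel W e \<nu> c \<longleftrightarrow> inner e p = \<nu> \<and> support_fun W p \<le> ereal c"
  by (simp add: support_sublevel_def support_fun_le_iff)

lemma support_sublevel_eq_Inter:
  "support_sublevel W e \<nu> c = {p. inner e p = \<nu>} \<inter> (\<Inter>w\<in>W. {p. inner w p \<le> c})"
  by (auto simp: support_sublevel_def)

lemma closed_support_sublevel: "closed (support_sublevel W e \<nu> c)"
  by (simp add: support_sublevel_eq_Inter closed_Int closed_INT closed_hyperplane closed_halfspace_le)

lemma convex_support_sublevel: "convex (support_sublevel W e \<nu> c)"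
  by (simp add: support_sublevel_eq_Inter convex_Int convex_INT convex_hyperplane convex_halfspace_le)

lemma bounded_support_sublevel:
  fixes e :: "'v::euclidean_space"
  assumes pos: "\<And>q. q \<noteq> 0 \<Longrightarrow> inner e q = 0 \<Longrightarrow> 0 < support_fun W q"
  shows "bounded (support_sublevel W e \<nu> c)"
proof (rule ccontr)
  let ?S = "support_sublevel W e \<nu> c"
  assume unbounded: "\<not> bounded ?S"
  then obtain a where a: "a \<in> ?S" by fastforce
  obtain d where "d \<noteq> 0" and ray: "\<And>t. 0 \<le> t \<Longrightarrow> a + t *\<^sub>R d \<in> ?S"
    using unbounded_closed_convex_contains_ray[OF closed_support_sublevel convex_support_sublevel unbounded a] by blast
  have "inner e d = 0"
    using ray[of 1] a by (simp add: support_sublevel_def inner_add_right)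
  then obtain w where w: "w \<in> W" and "0 < inner w d"
    using pos[OF \<open>d \<noteq> 0\<close>] by (auto simp: support_fun_def less_SUP_iff)
  define t where "t = (c - inner w a + 1) / inner w d"
  have "inner w a \<le> c" using a w by (simp add: support_sublevel_def)
  then have "0 \<le> t" using \<open>0 < inner w d\<close> by (simp add: t_def)
  have "inner w (a + t *\<^sub>R d) = c + 1"
    using \<open>0 < inner w d\<close> by (simp add: t_def inner_add_right)
  moreover have "inner w (a + t *\<^sub>R d) \<le> c"
    using ray[OF \<open>0 \<le> t\<close>] w by (simp add: support_sublevel_def)
  ultimately show False by simp
qed

lemma compact_support_sublevel:
  fixes e :: "'v::euclidean_space"
  assumes "\<And>q. q \<noteq> 0 \<Longrightarrow> inner e q = 0 \<Longrightarrow> 0 < support_fun W q"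
  shows "compact (support_sublevel W e \<nu> c)"
  using bounded_support_sublevel[OF assms] closed_support_sublevel
  by (simp add: compact_eq_bounded_closed)

lemma support_fun_scaleR_less_infty:
  assumes "support_fun W p < \<infinity>" and "0 \<le> t"
  shows "support_fun W (t *\<^sub>R p) < \<infinity>"
proof -
  obtain b where "support_fun W p \<le> ereal b"
    using assms(1) by (cases "support_fun W p") auto
  then have "\<forall>w\<in>W. inner w (t *\<^sub>R p) \<le> t * b"
    using \<open>0 \<le> t\<close> by (auto simp: support_fun_le_iff intro: mult_left_mono)
  then have "support_fun W (t *\<^sub>R p) \<le> ereal (t * b)"
    by (simp add: support_fun_le_iff)
  then show ?thesis by (rule le_less_trans) simp
qed

lemma support_sublevel_mono: "c \<le> c' \<Longrightarrow> support_sublevel W e \<nu> c \<subseteq> support_sublevel W e \<nu> c'"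
  by (auto simp: support_sublevel_def intro: order_trans)

lemma support_sublevel_at_Inf_nonempty:
  fixes e :: "'v::euclidean_space"
  assumes pos: "\<And>q. q \<noteq> 0 \<Longrightarrow> inner e q = 0 \<Longrightarrow> 0 < support_fun W q"
    and Inf: "(INF p\<in>{p. inner e p = \<nu>}. support_fun W p) = ereal m"
  shows "support_sublevel W e \<nu> m \<noteq> {}"
proof -
  define K where "K n = support_sublevel W e \<nu> (m + inverse (Suc n))" for n :: nat
  have "\<Inter> (range K) \<noteq> {}"
  proof (rule compact_nest)
    show "compact (K n)" for n
      unfolding K_def using pos by (rule compact_support_sublevel)
    show "K n \<noteq> {}" for n
    proof -
      have "(INF p\<in>{p. inner e p = \<nu>}. support_fun W p) < ereal (m + inverse (Suc n))"
        by (simp add: Inf)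
      then obtain p where "inner e p = \<nu>" and "support_fun W p < ereal (m + inverse (Suc n))"
        unfolding INF_less_iff by blast
      then have "p \<in> K n" by (simp add: K_def mem_support_sublevel_iff)
      then show ?thesis by blast
    qed
    show "K n \<subseteq> K k" if "k \<le> n" for k n
      unfolding K_def using that by (intro support_sublevel_mono) (simp add: field_simps)
  qed
  then obtain p where p: "\<And>n. p \<in> K n" by blast
  have "inner w p \<le> m" if "w \<in> W" for w
  proof (rule field_le_epsilon)
    fix \<epsilon> :: real assume "0 < \<epsilon>"
    then obtain n where "inverse (Suc n) < \<epsilon>" using reals_Archimedean by blast
    moreover have "inner w p \<le> m + inverse (Suc n)"
      using p[of n] that by (simp add: K_def support_sublevel_def)
    ultimately show "inner w p \<le> m + \<epsilon>" by linarith
  qed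
  then have "p \<in> support_sublevel W e \<nu> m"
    using p[of 0] by (simp add: K_def support_sublevel_def)
  then show ?thesis by blast
qed

lemma support_argmin_eq_sublevel_Inf:
  assumes Inf: "(INF p\<in>{p. inner e p = \<nu>}. support_fun W p) = ereal m"
  shows "support_argmin W e \<nu> = support_sublevel W e \<nu> m"
proof (intro equalityI subsetI)
  fix p assume "p \<in> support_argmin W e \<nu>"
  then have "inner e p = \<nu>" and "support_fun W p \<le> ereal m"
    unfolding support_argmin_def Inf[symmetric] by (auto intro: INF_greatest)
  then show "p \<in> support_sublevel W e \<nu> m"
    by (simp add: mem_support_sublevel_iff)
next
  fix p assume "p \<in> support_sublevel W e \<nu> m"
  then have "inner e p = \<nu>" and "support_fun W p \<le> ereal m"
    by (simp_all add: mem_support_sublevel_iff)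
  moreover have "ereal m \<le> support_fun W p'" if "inner e p' = \<nu>" for p'
    unfolding Inf[symmetric] using that by (intro INF_lower) simp
  ultimately show "p \<in> support_argmin W e \<nu>"
    unfolding support_argmin_def by (auto intro: order_trans le_less_trans)
qed

lemma support_argmin_nonempty_compact_convex:
  fixes e :: "'v::euclidean_space"
  assumes pos: "\<And>q. q \<noteq> 0 \<Longrightarrow> inner e q = 0 \<Longrightarrow> 0 < support_fun W q"
    and "- e \<in> W" and p0: "inner e p0 = \<nu>" "support_fun W p0 < \<infinity>"
  shows "support_argmin W e \<nu> \<noteq> {} \<and> compact (support_argmin W e \<nu>) \<and> convex (support_argmin W e \<nu>)"
proof -
  let ?m = "INF p\<in>{p. inner e p = \<nu>}. support_fun W p"
  have "?m \<le> support_fun W p0"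
    using p0 by (intro INF_lower) simp
  moreover have "ereal (- \<nu>) \<le> ?m"
    using support_fun_ge[OF \<open>- e \<in> W\<close>] by (intro INF_greatest) force
  ultimately obtain m where m: "?m = ereal m"
    using p0 by (cases ?m) auto
  show ?thesis
    unfolding support_argmin_eq_sublevel_Inf[OF m]
    using support_sublevel_at_Inf_nonempty[OF pos m] compact_support_sublevel[OF pos]
      convex_support_sublevel
    by blast
qed

lemma support_argmin_zero:
  assumes pos: "\<And>q. q \<noteq> 0 \<Longrightarrow> inner e q = 0 \<Longrightarrow> 0 < support_fun W q" and "W \<noteq> {}"
  shows "support_argmin W e 0 = {0}"
proof -
  have zero: "support_fun W 0 = 0"
    using \<open>W \<noteq> {}\<close> by (rule support_fun_zero)
  have "support_fun W 0 \<le> support_fun W p" if "inner e p = 0" for p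
    using pos[of p] that zero by (cases "p = 0") auto
  then have "0 \<in> support_argmin W e 0"
    by (simp add: support_argmin_def zero)
  moreover have "p = 0" if "p \<in> support_argmin W e 0" for p
  proof (rule ccontr)
    assume "p \<noteq> 0"
    moreover have "inner e p = 0" and "support_fun W p \<le> support_fun W 0"
      using that by (auto simp: support_argmin_def)
    ultimately show False using pos[of p] zero by simp
  qed
  ultimately show ?thesis by blast
qed

section \<open>Strict expectation boundedness\<close>

lemma exp_neg_eq_integral:
  assumes Z_nonneg: "AE x in M. 0 \<le> Z x" and ZX: "integrable M (\<lambda>x. Z x * X x)"
  shows "exp_neg M Z X = ereal (- integral\<^sup>L M (\<lambda>x. Z x * X x))"
proof -
  let ?pos = "\<lambda>x. max 0 (Z x * X x)" and ?neg = "\<lambda>x. max 0 (- (Z x * X x))"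
  have int_pos: "integrable M ?pos" and int_neg: "integrable M ?neg"
    using ZX by auto
  have "(\<integral>\<^sup>+ x. ennreal (Z x * max 0 (- X x)) \<partial>M) = (\<integral>\<^sup>+ x. ennreal (?neg x) \<partial>M)"
    by (rule nn_integral_cong_AE) (use Z_nonneg in \<open>auto simp: max_def mult_le_0_iff\<close>)
  also have "\<dots> = ennreal (integral\<^sup>L M ?neg)"
    using int_neg by (rule nn_integral_eq_integral) auto
  finally have neg: "(\<integral>\<^sup>+ x. ennreal (Z x * max 0 (- X x)) \<partial>M) = ennreal (integral\<^sup>L M ?neg)" .
  have "(\<integral>\<^sup>+ x. ennreal (Z x * max 0 (X x)) \<partial>M) = (\<integral>\<^sup>+ x. ennreal (?pos x) \<partial>M)"
    by (rule nn_integral_cong_AE) (use Z_nonneg in \<open>auto simp: max_def mult_le_0_iff zero_le_mult_iff\<close>)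
  also have "\<dots> = ennreal (integral\<^sup>L M ?pos)"
    using int_pos by (rule nn_integral_eq_integral) auto
  finally have pos: "(\<integral>\<^sup>+ x. ennreal (Z x * max 0 (X x)) \<partial>M) = ennreal (integral\<^sup>L M ?pos)" .
  have "integral\<^sup>L M (\<lambda>x. Z x * X x) = integral\<^sup>L M (\<lambda>x. ?pos x - ?neg x)"
    by (rule Bochner_Integration.integral_cong) (auto simp: max_def)
  also have "\<dots> = integral\<^sup>L M ?pos - integral\<^sup>L M ?neg"
    using int_pos int_neg by simp
  finally have split: "integral\<^sup>L M (\<lambda>x. Z x * X x) = integral\<^sup>L M ?pos - integral\<^sup>L M ?neg" .
  have "integral\<^sup>L M ?pos \<ge> 0" "integral\<^sup>L M ?neg \<ge> 0"
    by (auto intro: integral_nonneg_AE)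
  then show ?thesis
    unfolding exp_neg_def Let_def neg pos split by (simp add: enn2ereal_ennreal)
qed

lemma integrable_Linf_mult:
  assumes Z: "Z \<in> Linf M" and X: "integrable M X"
  shows "integrable M (\<lambda>x. Z x * X x)"
proof -
  obtain B where B: "AE x in M. \<bar>Z x\<bar> \<le> B" and Z_meas: "Z \<in> borel_measurable M"
    using Z unfolding Linf_def by auto
  show ?thesis
  proof (rule Bochner_Integration.integrable_bound[where f = "\<lambda>x. B * X x"])
    show "integrable M (\<lambda>x. B * X x)" using X by simp
    show "(\<lambda>x. Z x * X x) \<in> borel_measurable M" using Z_meas X by measurable
    show "AE x in M. norm (Z x * X x) \<le> norm (B * X x)"
      using B by eventually_elim (auto simp: abs_mult intro: mult_right_mono)
  qed
qed

lemma integral_mult_le_of_uniformly_close: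
  fixes X W Z :: "'a \<Rightarrow> real"
  assumes X: "integrable M X" and WX: "integrable M (\<lambda>x. W x * X x)"
    and ZX: "integrable M (\<lambda>x. Z x * X x)" and close: "AE x in M. \<bar>Z x - W x\<bar> \<le> \<epsilon>"
  shows "integral\<^sup>L M (\<lambda>x. Z x * X x) \<le> integral\<^sup>L M (\<lambda>x. W x * X x) + \<epsilon> * integral\<^sup>L M (\<lambda>x. \<bar>X x\<bar>)"
proof -
  have diff: "integrable M (\<lambda>x. (Z x - W x) * X x)"
    using Bochner_Integration.integrable_diff[OF ZX WX] by (simp add: algebra_simps)
  have "integral\<^sup>L M (\<lambda>x. Z x * X x) - integral\<^sup>L M (\<lambda>x. W x * X x)
      = integral\<^sup>L M (\<lambda>x. (Z x - W x) * X x)"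
    using ZX WX by (simp add: left_diff_distrib)
  also have "\<dots> \<le> integral\<^sup>L M (\<lambda>x. \<epsilon> * \<bar>X x\<bar>)"
  proof (rule integral_mono_AE[OF diff])
    show "integrable M (\<lambda>x. \<epsilon> * \<bar>X x\<bar>)" using X by auto
    show "AE x in M. (Z x - W x) * X x \<le> \<epsilon> * \<bar>X x\<bar>"
      using close by eventually_elim (metis abs_ge_self abs_mult abs_ge_zero mult_right_mono order_trans)
  qed
  finally show ?thesis by simp
qed

lemma exists_bounded_density_below_mean:
  assumes "prob_space M" and X: "integrable M X" and nonconst: "\<not> (\<exists>c. AE x in M. X x = c)"
  obtains W where "W \<in> densities M \<inter> Linf M"
    and "integral\<^sup>L M (\<lambda>x. W x * X x) < integral\<^sup>L M X"
proof -
  interpret prob_space M by fact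
  define m where "m = integral\<^sup>L M X"
  define A where "A = {x\<in>space M. X x < m}"
  have A: "A \<in> sets M" unfolding A_def using X by measurable
  have "emeasure M A \<noteq> 0"
  proof
    assume "emeasure M A = 0"
    then have ge: "AE x in M. 0 \<le> X x - m"
      using AE_iff_measurable[OF A, of "\<lambda>x. \<not> X x < m"] unfolding A_def by auto
    have "integral\<^sup>L M (\<lambda>x. X x - m) = 0"
      using X by (simp add: m_def prob_space)
    then have "AE x in M. X x - m = 0"
      using integral_nonneg_eq_0_iff_AE[OF _ ge] X by simp
    then show False using nonconst by auto
  qed
  then have PA: "measure M A > 0"
    by (simp add: emeasure_eq_measure zero_less_measure_iff)
  define W where "W = (\<lambda>x. indicator A x / measure M A)"
  have "integral\<^sup>L M (\<lambda>x. X x * indicator A x) < integral\<^sup>L M (\<lambda>x. m * indicator A x)"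
  proof (rule integral_less_AE)
    show "integrable M (\<lambda>x. X x * indicator A x)" using A X by (rule integrable_real_mult_indicator)
    show "integrable M (\<lambda>x. m * indicator A x)" using A by (simp add: integrable_indicator_iff emeasure_eq_measure)
  qed (use A \<open>emeasure M A \<noteq> 0\<close> in \<open>auto simp: A_def indicator_def\<close>)
  then have "integral\<^sup>L M (\<lambda>x. W x * X x) < m"
    using A PA by (simp add: W_def mult.commute[of _ "X _"] divide_less_eq)
  moreover have "W \<in> densities M"
    using A PA by (auto simp: densities_def W_def integrable_indicator_iff emeasure_eq_measure)
  moreover have "W \<in> Linf M"
    using A PA unfolding Linf_def W_def by (auto intro!: exI[of _ "1 / measure M A"] simp: indicator_def)
  ultimately show thesis using that m_def by blast
qed

lemma cond_INT_subset: "cond_INT M Q Qt \<Longrightarrow> Qt' \<subseteq> Qt \<Longrightarrow> cond_INT M Q Qt'"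
  unfolding cond_INT_def by blast

lemma cond_INT_oneE:
  assumes INT: "cond_INT M Q {\<lambda>_. 1}" and W: "W \<in> densities M \<inter> Linf M" and "0 < \<epsilon>"
  obtains Z l where "Z \<in> Linf M" and "AE x in M. \<bar>Z x - W x\<bar> \<le> \<epsilon>"
    and "0 < l" and "l < 1" and "(\<lambda>x. l * Z x + (1 - l)) \<in> Q"
proof -
  have "\<exists>E\<subseteq>densities M. E \<subseteq> Linf M \<and>
      (\<forall>W\<in>densities M \<inter> Linf M. \<forall>\<epsilon>>0. \<exists>Z\<in>E. AE x in M. \<bar>Z x - W x\<bar> \<le> \<epsilon>) \<and>
      (\<forall>Z\<in>E. \<exists>l>0. l < 1 \<and> (\<lambda>x. l * Z x + (1 - l)) \<in> Q)"
    using INT unfolding cond_INT_def by simp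
  then obtain E where "E \<subseteq> Linf M"
    and E_dense: "\<forall>W\<in>densities M \<inter> Linf M. \<forall>\<epsilon>>0. \<exists>Z\<in>E. AE x in M. \<bar>Z x - W x\<bar> \<le> \<epsilon>"
    and E_mix: "\<forall>Z\<in>E. \<exists>l>0. l < 1 \<and> (\<lambda>x. l * Z x + (1 - l)) \<in> Q"
    by auto
  obtain Z where "Z \<in> E" and "AE x in M. \<bar>Z x - W x\<bar> \<le> \<epsilon>"
    using E_dense W \<open>0 < \<epsilon>\<close> by blast
  moreover obtain l where "0 < l" "l < 1" and "(\<lambda>x. l * Z x + (1 - l)) \<in> Q"
    using E_mix \<open>Z \<in> E\<close> by blast
  ultimately show thesis using that \<open>E \<subseteq> Linf M\<close> by blast
qed

lemma INT_one_mixture_below_mean: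
  assumes X: "integrable M X" and INT: "cond_INT M Q {\<lambda>_. 1}"
    and W: "W \<in> densities M \<inter> Linf M" and WX_less: "integral\<^sup>L M (\<lambda>x. W x * X x) < integral\<^sup>L M X"
  obtains Zc where "Zc \<in> Q" and "integrable M (\<lambda>x. Zc x * X x)"
    and "integral\<^sup>L M (\<lambda>x. Zc x * X x) < integral\<^sup>L M X"
proof -
  define C where "C = integral\<^sup>L M (\<lambda>x. \<bar>X x\<bar>)"
  define \<delta> where "\<delta> = integral\<^sup>L M X - integral\<^sup>L M (\<lambda>x. W x * X x)"
  define \<epsilon> where "\<epsilon> = \<delta> / (C + 1)"
  have "C \<ge> 0" unfolding C_def by (rule integral_nonneg_AE) auto
  moreover have "\<delta> > 0" unfolding \<delta>_def using WX_less by simp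
  ultimately have "\<epsilon> > 0" and "\<epsilon> * (C + 1) = \<delta>"
    unfolding \<epsilon>_def by auto
  then have \<epsilon>_small: "\<epsilon> * C < \<delta>"
    by (simp add: distrib_left)
  obtain Z l where Z: "Z \<in> Linf M" and Z_close: "AE x in M. \<bar>Z x - W x\<bar> \<le> \<epsilon>"
    and "0 < l" and mix_in_Q: "(\<lambda>x. l * Z x + (1 - l)) \<in> Q"
    using cond_INT_oneE[OF INT W \<open>\<epsilon> > 0\<close>] by blast
  have ZX: "integrable M (\<lambda>x. Z x * X x)" and WX: "integrable M (\<lambda>x. W x * X x)"
    using Z W X by (auto intro: integrable_Linf_mult)
  have "integral\<^sup>L M (\<lambda>x. Z x * X x) < integral\<^sup>L M X"
    using integral_mult_le_of_uniformly_close[OF X WX ZX Z_close] \<epsilon>_small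
    unfolding C_def \<delta>_def by linarith
  then have "l * integral\<^sup>L M (\<lambda>x. Z x * X x) + (1 - l) * integral\<^sup>L M X < integral\<^sup>L M X"
    using \<open>0 < l\<close> by (simp add: algebra_simps)
  moreover have "(\<lambda>x. (l * Z x + (1 - l)) * X x) = (\<lambda>x. l * (Z x * X x) + (1 - l) * X x)"
    by (auto simp: algebra_simps)
  ultimately show thesis
    using that[OF mix_in_Q] ZX X by simp
qed

lemma strictly_expectation_bounded_if_INT_one:
  assumes prob: "prob_space M" and L_int: "\<forall>X\<in>L. integrable M X"
    and Q_dens: "Q \<subseteq> densities M" and INT: "cond_INT M Q {\<lambda>_. 1}"
  shows "strictly_expectation_bounded M L Q"
  unfolding strictly_expectation_bounded_def
proof (intro ballI impI)
  fix X assume "X \<in> L" and nonconst: "\<not> (\<exists>c. AE x in M. X x = c)"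
  have X: "integrable M X" using \<open>X \<in> L\<close> L_int by blast
  obtain W where "W \<in> densities M \<inter> Linf M" and "integral\<^sup>L M (\<lambda>x. W x * X x) < integral\<^sup>L M X"
    using exists_bounded_density_below_mean[OF prob X nonconst] .
  then obtain Zc where "Zc \<in> Q" and ZcX: "integrable M (\<lambda>x. Zc x * X x)"
    and "integral\<^sup>L M (\<lambda>x. Zc x * X x) < integral\<^sup>L M X"
    using INT_one_mixture_below_mean[OF X INT] by blast
  then have "ereal (integral\<^sup>L M (\<lambda>x. - X x)) < ereal (- integral\<^sup>L M (\<lambda>x. Zc x * X x))"
    by simp
  also have "\<dots> = exp_neg M Zc X"
    using \<open>Zc \<in> Q\<close> Q_dens ZcX by (subst exp_neg_eq_integral) (auto simp: densities_def)
  also have "\<dots> \<le> rho M Q X"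
    unfolding rho_def using \<open>Zc \<in> Q\<close> by (rule SUP_upper)
  finally show "ereal (integral\<^sup>L M (\<lambda>x. - X x)) < rho M Q X" .
qed

section \<open>Excess returns of portfolios\<close>

definition weighted_mean_excess ::
  "'a measure \<Rightarrow> ('a \<Rightarrow> real) \<Rightarrow> real \<Rightarrow> ('d \<Rightarrow> 'a \<Rightarrow> real) \<Rightarrow> real^'d::finite" where
  "weighted_mean_excess M Z r R = (\<chi> i. integral\<^sup>L M (\<lambda>x. Z x * (R i x - r)))"

lemma
  assumes "\<forall>i. integrable M (\<lambda>x. Z x * (R i x - r))"
  shows integrable_mult_excess: "integrable M (\<lambda>x. Z x * excess r R p x)"
    and integral_mult_excess: "integral\<^sup>L M (\<lambda>x. Z x * excess r R p x) = inner (weighted_mean_excess M Z r R) p"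
proof -
  have eq: "(\<lambda>x. Z x * excess r R p x) = (\<lambda>x. \<Sum>i\<in>UNIV. p $ i * (Z x * (R i x - r)))"
    by (auto simp: excess_def sum_distrib_left algebra_simps)
  show "integrable M (\<lambda>x. Z x * excess r R p x)"
    unfolding eq using assms by auto
  show "integral\<^sup>L M (\<lambda>x. Z x * excess r R p x) = inner (weighted_mean_excess M Z r R) p"
    unfolding eq using assms
    by (simp add: weighted_mean_excess_def inner_vec_def mult.commute)
qed

lemma integral_excess:
  assumes "prob_space M" and R_int: "\<forall>i. integrable M (R i)"
  shows "integral\<^sup>L M (excess r R p) = inner (weighted_mean_excess M (\<lambda>_. 1) r R) p"
proof -
  interpret prob_space M by fact
  have "\<forall>i. integrable M (\<lambda>x. 1 * (R i x - r))"
    using R_int by simp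
  from integral_mult_excess[OF this] show ?thesis by simp
qed

lemma rho_excess_eq_support_fun:
  assumes Q_dens: "Q \<subseteq> densities M" and Q_int: "\<forall>Z\<in>Q. \<forall>i. integrable M (\<lambda>x. Z x * R i x)"
  shows "rho M Q (excess r R p) = support_fun ((\<lambda>Z. - weighted_mean_excess M Z r R) ` Q) p"
proof -
  have "exp_neg M Z (excess r R p) = ereal (inner (- weighted_mean_excess M Z r R) p)" if "Z \<in> Q" for Z
  proof -
    have Z: "integrable M Z" "AE x in M. 0 \<le> Z x"
      using that Q_dens by (auto simp: densities_def)
    have "integrable M (\<lambda>x. Z x * R i x - r * Z x)" for i
      using that Q_int Z by auto
    then have ZR: "\<forall>i. integrable M (\<lambda>x. Z x * (R i x - r))"
      by (simp add: algebra_simps)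
    show ?thesis
      using exp_neg_eq_integral[OF Z(2) integrable_mult_excess[OF ZR]] integral_mult_excess[OF ZR]
      by simp
  qed
  then show ?thesis
    unfolding rho_def support_fun_def image_image by (rule SUP_cong[OF refl])
qed

lemma nonredundant_excess_ae_zero:
  assumes S0_pos: "\<forall>i. S0 i > 0" and nonred: "nonredundant M r S0 S1"
    and zero: "AE x in M. excess r (ret S0 S1) p x = 0"
  shows "p = 0"
proof -
  have S0_nz: "S0 i \<noteq> 0" for i using S0_pos by (metis less_irrefl)
  (* Buying p_i worth of each risky asset on credit costs nothing and pays off X_p. *)
  define t0 where "t0 = - (\<Sum>i\<in>UNIV. p $ i)"
  define t where "t = (\<chi> i. p $ i / S0 i)"
  have price: "t0 * 1 + (\<Sum>i\<in>UNIV. t $ i * S0 i) = 0"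
    using S0_nz by (simp add: t0_def t_def)
  have "t0 * (1 + r) + (\<Sum>i\<in>UNIV. t $ i * S1 i x) = excess r (ret S0 S1) p x" for x
  proof -
    have "t0 * (1 + r) + (\<Sum>i\<in>UNIV. t $ i * S1 i x) = (\<Sum>i\<in>UNIV. t $ i * S1 i x - p $ i * (1 + r))"
      by (simp add: t0_def sum_distrib_right sum_subtractf)
    also have "\<dots> = excess r (ret S0 S1) p x"
      unfolding excess_def by (rule sum.cong) (auto simp: t_def ret_def field_simps S0_nz)
    finally show ?thesis .
  qed
  then have "AE x in M. t0 * (1 + r) + (\<Sum>i\<in>UNIV. t $ i * S1 i x) = 0"
    using zero by simp
  then have "t = 0" using nonred price unfolding nonredundant_def by blast
  then show "p = 0" using S0_nz by (auto simp: t_def vec_eq_iff)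
qed

lemma rho_excess_pos:
  assumes "prob_space M" and S0_pos: "\<forall>i. S0 i > 0" and nonred: "nonredundant M r S0 S1"
    and L_int: "\<forall>X\<in>L. integrable M X" and X_in_L: "excess r (ret S0 S1) q \<in> L"
    and seb: "strictly_expectation_bounded M L Q"
    and "q \<noteq> 0" and mean_zero: "integral\<^sup>L M (excess r (ret S0 S1) q) = 0"
  shows "0 < rho M Q (excess r (ret S0 S1) q)"
proof -
  interpret prob_space M by fact
  let ?X = "excess r (ret S0 S1) q"
  have "\<not> (\<exists>c. AE x in M. ?X x = c)"
  proof
    assume "\<exists>c. AE x in M. ?X x = c"
    then obtain c where c: "AE x in M. ?X x = c" by blast
    have "integrable M ?X" using X_in_L L_int by blast
    then have "integral\<^sup>L M ?X = c"
      using integral_cong_AE[of ?X M "\<lambda>_. c"] c by (simp add: prob_space)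
    then have "AE x in M. ?X x = 0" using c mean_zero by simp
    then show False using nonredundant_excess_ae_zero[OF S0_pos nonred] \<open>q \<noteq> 0\<close> by blast
  qed
  then have "ereal (integral\<^sup>L M (\<lambda>x. - ?X x)) < rho M Q ?X"
    using seb X_in_L unfolding strictly_expectation_bounded_def by blast
  then show ?thesis using mean_zero by (simp add: zero_ereal_def)
qed

theorem proposition4p11:
  fixes M :: "'a measure" and r :: real
    and S0 :: "'d::finite \<Rightarrow> real" and S1 :: "'d \<Rightarrow> 'a \<Rightarrow> real"
    and L Q Qt :: "('a \<Rightarrow> real) set"
  assumes prob: "prob_space M"
    and r_gt: "r > -1"
    and S0_pos: "\<forall>i. S0 i > 0"
    and S1_meas: "\<forall>i. S1 i \<in> borel_measurable M"
    and nonred: "nonredundant M r S0 S1"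
    and R_int: "\<forall>i. integrable M (ret S0 S1 i)"
    and nontriv: "\<exists>i. integral\<^sup>L M (ret S0 S1 i) \<noteq> r"
    and L: "riesz_between M L"
    and X_in_L: "\<forall>p. excess r (ret S0 S1) p \<in> L"
    and Q_dens: "Q \<subseteq> densities M"
    and Q_convex: "convex_fset Q"
    and Q_ae: "ae_closed M Q"
    and one_Q: "(\<lambda>_. 1) \<in> Q"
    and condI: "\<forall>Z\<in>Q. \<forall>i. integrable M (\<lambda>x. Z x * ret S0 S1 i x)"
    and Qt_sub: "Qt \<subseteq> Q"
    and POS: "cond_POS M Qt"
    and INT: "cond_INT M Q Qt"
    and one_Qt: "(\<lambda>_. 1) \<in> Qt"
  shows "strictly_expectation_bounded M L Q
         \<and> Pi_rho M Q r (ret S0 S1) 0 = {0}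
         \<and> (rho_nu M Q r (ret S0 S1) 1 < \<infinity> \<longrightarrow>
              (\<forall>\<nu>\<ge>0. Pi_rho M Q r (ret S0 S1) \<nu> \<noteq> {}
                     \<and> compact (Pi_rho M Q r (ret S0 S1) \<nu>)
                     \<and> convex (Pi_rho M Q r (ret S0 S1) \<nu>)))"
proof -
  let ?R = "ret S0 S1"
  define W where "W = (\<lambda>Z. - weighted_mean_excess M Z r ?R) ` Q"
  define e where "e = weighted_mean_excess M (\<lambda>_. 1) r ?R"
  have L_int: "\<forall>X\<in>L. integrable M X" using L by (simp add: riesz_between_def)
  have rho_eq: "rho M Q (excess r ?R p) = support_fun W p" for p
    unfolding W_def using Q_dens condI by (rule rho_excess_eq_support_fun)
  have mean_eq: "integral\<^sup>L M (excess r ?R p) = inner e p" for p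
    unfolding e_def using prob R_int by (rule integral_excess)
  have seb: "strictly_expectation_bounded M L Q"
    using prob L_int Q_dens cond_INT_subset[OF INT] one_Qt
    by (intro strictly_expectation_bounded_if_INT_one) auto
  have pos: "0 < support_fun W q" if "q \<noteq> 0" "inner e q = 0" for q
    using rho_excess_pos[OF prob S0_pos nonred L_int _ seb] X_in_L that
    by (simp add: rho_eq mean_eq)
  have Pi_rho_eq: "Pi_rho M Q r ?R \<nu> = support_argmin W e \<nu>" for \<nu>
    by (simp add: Pi_rho_def Pi_nu_def support_argmin_def rho_eq mean_eq)
  have "- e \<in> W" using one_Q by (auto simp: W_def e_def)
  have "\<forall>\<nu>\<ge>0. Pi_rho M Q r ?R \<nu> \<noteq> {} \<and> compact (Pi_rho M Q r ?R \<nu>) \<and> convex (Pi_rho M Q r ?R \<nu>)"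
    if finite_rho_1: "rho_nu M Q r ?R 1 < \<infinity>"
  proof (intro allI impI)
    fix \<nu> :: real assume "0 \<le> \<nu>"
    obtain p1 where "inner e p1 = 1" and "support_fun W p1 < \<infinity>"
      using finite_rho_1 unfolding rho_nu_def Pi_nu_def rho_eq mean_eq INF_less_iff by blast
    then have "inner e (\<nu> *\<^sub>R p1) = \<nu>" and "support_fun W (\<nu> *\<^sub>R p1) < \<infinity>"
      using support_fun_scaleR_less_infty \<open>0 \<le> \<nu>\<close> by auto
    with pos \<open>- e \<in> W\<close>
    show "Pi_rho M Q r ?R \<nu> \<noteq> {} \<and> compact (Pi_rho M Q r ?R \<nu>) \<and> convex (Pi_rho M Q r ?R \<nu>)"
      unfolding Pi_rho_eq by (rule support_argmin_nonempty_compact_convex)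
  qed
  then show ?thesis
    using seb support_argmin_zero[OF pos] \<open>- e \<in> W\<close> Pi_rho_eq by blast
qed

end
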